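(* Let $\phi:(\mathcal C,S)\to(\mathcal D,T)$ be an admissible morphism from a finite quasi-schemoid whose underlying category is a groupoid to a basic quasi-schemoid, and let $n^\phi_\sigma$ ($\sigma\in S$) be the integers such that $\#(\phi^{-1}(g)\cap x\sigma)=n^\phi_\sigma$ for all $x\in ob(\mathcal C)$ and $g\in\phi(\sigma)$ with $t(g)=\phi(x)$. Then for all $\pi,\rho\in S$ and $\tau\in T$, $$\sum_{\sigma\in S:\ \phi(\sigma)=\tau}p^\sigma_{\pi\rho}\,n^\phi_\sigma=p^\tau_{\phi(\pi)\phi(\rho)}\,n^\phi_\pi\,n^\phi_\rho .$$
   Context: Write $s(f),t(f)$ for source and target. A quasi-schemoid is a pair $(\mathcal C,S)$ with $\mathcal C$ a small category and $S$ a partition of $mor(\mathcal C)$ into nonempty blocks such that for all $\sigma,\tau,\mu\in S$ and $f,g\in\mu$ the sets $\{(a,b)\in\sigma\times\tau: s(a)=t(b), a\circ b=f\}$ and the analogous set for $g$ have equal cardinality, denoted $p^\mu_{\sigma\tau}$. It is finite if $mor(\mathcal C)$ is finite; unital if every block meeting $\{1_x\}$ is contained in it; basic if unital and $\mathcal C$ is a groupoid. A morphism of quasi-schemoids $\phi$ is a functor such that each $\phi(\sigma)$ lies in a unique block of the target, also denoted $\phi(\sigma)$. $\phi$ is admissible if for every $x\in ob(\mathcal C)$, $\sigma\in S$ and $g\in\phi(\sigma)$ with $t(g)=\phi(x)$ there exists $f\in\sigma$ with $t(f)=x$ and $\phi(f)=g$. $x\sigma=\{f\in\sigma:t(f)=x\}$;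 the integers $n^\phi_\sigma$ exist and are positive under these hypotheses. *)

theory Defs
  imports Main "HOL-Library.Equipollence"
begin

text \<open>A small category, given explicitly by its object set, morphism set, source and
target maps, composition (comp a b = a o b, meaningful when src a = tgt b) and identities.\<close>

record ('o, 'm) cat =
  Ob   :: "'o set"
  Mor  :: "'m set"
  src  :: "'m \<Rightarrow> 'o"
  tgt  :: "'m \<Rightarrow> 'o"
  comp :: "'m \<Rightarrow> 'm \<Rightarrow> 'm"
  ident :: "'o \<Rightarrow> 'm"

definition category :: "('o, 'm) cat \<Rightarrow> bool" where
  "category C \<longleftrightarrow>
     (\<forall>f\<in>Mor C. src C f \<in> Ob C \<and> tgt C f \<in> Ob C) \<and>
     (\<forall>x\<in>Ob C. ident C x \<in> Mor C \<and> src C (ident C x) = x \<and> tgt C (ident C x) = x) \<and>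
     (\<forall>a\<in>Mor C. \<forall>b\<in>Mor C. src C a = tgt C b \<longrightarrow>
        comp C a b \<in> Mor C \<and> src C (comp C a b) = src C b \<and> tgt C (comp C a b) = tgt C a) \<and>
     (\<forall>a\<in>Mor C. \<forall>b\<in>Mor C. \<forall>c\<in>Mor C. src C a = tgt C b \<longrightarrow> src C b = tgt C c \<longrightarrow>
        comp C (comp C a b) c = comp C a (comp C b c)) \<and>
     (\<forall>f\<in>Mor C. comp C (ident C (tgt C f)) f = f \<and> comp C f (ident C (src C f)) = f)"

definition groupoid :: "('o, 'm) cat \<Rightarrow> bool" where
  "groupoid C \<longleftrightarrow> category C \<and>
     (\<forall>f\<in>Mor C. \<exists>g\<in>Mor C. src C g = tgt C f \<and> tgt C g = src C f \<and>
        comp C g f = ident C (src C f) \<and> comp C f g = ident C (tgt C f))"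

definition is_partition :: "'m set set \<Rightarrow> 'm set \<Rightarrow> bool" where
  "is_partition S M \<longleftrightarrow> (\<forall>\<sigma>\<in>S. \<sigma> \<noteq> {}) \<and> \<Union>S = M \<and>
     (\<forall>\<sigma>\<in>S. \<forall>\<tau>\<in>S. \<sigma> \<noteq> \<tau> \<longrightarrow> \<sigma> \<inter> \<tau> = {})"

definition fact_pairs :: "('o, 'm) cat \<Rightarrow> 'm set \<Rightarrow> 'm set \<Rightarrow> 'm \<Rightarrow> ('m \<times> 'm) set" where
  "fact_pairs C \<sigma> \<tau> f = {(a, b). a \<in> \<sigma> \<and> b \<in> \<tau> \<and> src C a = tgt C b \<and> comp C a b = f}"

definition quasi_schemoid :: "('o, 'm) cat \<Rightarrow> 'm set set \<Rightarrow> bool" where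
  "quasi_schemoid C S \<longleftrightarrow> category C \<and> is_partition S (Mor C) \<and>
     (\<forall>\<sigma>\<in>S. \<forall>\<tau>\<in>S. \<forall>\<mu>\<in>S. \<forall>f\<in>\<mu>. \<forall>g\<in>\<mu>.
        fact_pairs C \<sigma> \<tau> f \<approx> fact_pairs C \<sigma> \<tau> g)"

definition pconst :: "('o, 'm) cat \<Rightarrow> 'm set \<Rightarrow> 'm set \<Rightarrow> 'm set \<Rightarrow> nat" where
  "pconst C \<mu> \<sigma> \<tau> = card (fact_pairs C \<sigma> \<tau> (SOME f. f \<in> \<mu>))"

definition finite_qs :: "('o, 'm) cat \<Rightarrow> 'm set set \<Rightarrow> bool" where
  "finite_qs C S \<longleftrightarrow> quasi_schemoid C S \<and> finite (Mor C)"

definition unital :: "('o, 'm) cat \<Rightarrow> 'm set set \<Rightarrow> bool" where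
  "unital C S \<longleftrightarrow> quasi_schemoid C S \<and>
     (\<forall>\<sigma>\<in>S. \<sigma> \<inter> ident C ` Ob C \<noteq> {} \<longrightarrow> \<sigma> \<subseteq> ident C ` Ob C)"

definition basic :: "('o, 'm) cat \<Rightarrow> 'm set set \<Rightarrow> bool" where
  "basic C S \<longleftrightarrow> unital C S \<and> groupoid C"

definition is_functor :: "('o, 'm) cat \<Rightarrow> ('p, 'n) cat \<Rightarrow> ('o \<Rightarrow> 'p) \<Rightarrow> ('m \<Rightarrow> 'n) \<Rightarrow> bool" where
  "is_functor C D Fo Fm \<longleftrightarrow>
     (\<forall>x\<in>Ob C. Fo x \<in> Ob D) \<and>
     (\<forall>f\<in>Mor C. Fm f \<in> Mor D \<and> src D (Fm f) = Fo (src C f) \<and> tgt D (Fm f) = Fo (tgt C f)) \<and>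
     (\<forall>a\<in>Mor C. \<forall>b\<in>Mor C. src C a = tgt C b \<longrightarrow> Fm (comp C a b) = comp D (Fm a) (Fm b)) \<and>
     (\<forall>x\<in>Ob C. Fm (ident C x) = ident D (Fo x))"

definition blk :: "'n set set \<Rightarrow> ('m \<Rightarrow> 'n) \<Rightarrow> 'm set \<Rightarrow> 'n set" where
  "blk T Fm \<sigma> = (THE \<tau>. \<tau> \<in> T \<and> Fm ` \<sigma> \<subseteq> \<tau>)"

definition qs_morphism ::
  "('o, 'm) cat \<Rightarrow> 'm set set \<Rightarrow> ('p, 'n) cat \<Rightarrow> 'n set set \<Rightarrow> ('o \<Rightarrow> 'p) \<Rightarrow> ('m \<Rightarrow> 'n) \<Rightarrow> bool" where
  "qs_morphism C S D T Fo Fm \<longleftrightarrow> quasi_schemoid C S \<and> quasi_schemoid D T \<and>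
     is_functor C D Fo Fm \<and> (\<forall>\<sigma>\<in>S. \<exists>!\<tau>. \<tau> \<in> T \<and> Fm ` \<sigma> \<subseteq> \<tau>)"

definition admissible ::
  "('o, 'm) cat \<Rightarrow> 'm set set \<Rightarrow> ('p, 'n) cat \<Rightarrow> 'n set set \<Rightarrow> ('o \<Rightarrow> 'p) \<Rightarrow> ('m \<Rightarrow> 'n) \<Rightarrow> bool" where
  "admissible C S D T Fo Fm \<longleftrightarrow> qs_morphism C S D T Fo Fm \<and>
     (\<forall>x\<in>Ob C. \<forall>\<sigma>\<in>S. \<forall>g\<in>blk T Fm \<sigma>. tgt D g = Fo x \<longrightarrow>
        (\<exists>f\<in>\<sigma>. tgt C f = x \<and> Fm f = g))"

end

theory Submission
  imports Defs
begin

text \<open>Fix \<open>h \<in> \<tau>\<close> with \<open>t(h) = \<phi>(x)\<close> and count the composable pairs \<open>(a, b) \<in> \<pi> \<times> \<rho>\<close> with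
  \<open>t(a) = x\<close> and \<open>\<phi>(a \<circ> b) = h\<close> in two ways. Grouped by the composite \<open>a \<circ> b\<close>, which runs over
  the lifts of \<open>h\<close> with target \<open>x\<close> in the blocks \<open>\<sigma>\<close> with \<open>\<phi>(\<sigma>) = \<tau>\<close>, there are
  \<open>\<Sum>\<^sub>\<sigma> p\<^sup>\<sigma>\<^sub>\<pi>\<^sub>\<rho> n\<^sub>\<sigma>\<close> of them. Grouped by the image \<open>(\<phi> a, \<phi> b)\<close>, which runs over the
  factorisations of \<open>h\<close> in \<open>\<phi>(\<pi>) \<times> \<phi>(\<rho>)\<close> by admissibility, there are \<open>p\<^sup>\<tau> n\<^sub>\<pi> n\<^sub>\<rho>\<close>
  of them: \<open>a\<close> is one of the \<open>n\<^sub>\<pi>\<close> lifts of \<open>\<phi> a\<close> with target \<open>x\<close>, and then \<open>b\<close> one of the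
  \<open>n\<^sub>\<rho>\<close> lifts of \<open>\<phi> b\<close> with target \<open>s(a)\<close>.

  If no such \<open>h\<close> exists, both sides vanish. On the right this uses that \<open>\<D>\<close> is a groupoid: a
  factorisation \<open>h = a' \<circ> b'\<close> gives \<open>a' = h \<circ> b'\<^sup>-\<^sup>1\<close>, so by the constancy of structure constants
  every element of the block of \<open>a'\<close>, in particular the image of any element of \<open>\<pi>\<close>, factors
  through \<open>\<tau>\<close> and shares its target with an element of \<open>\<tau>\<close>.\<close>

lemma card_eq_if_eqpoll: "A \<approx> B \<Longrightarrow> card A = card B"
  by (metis card.infinite eqpoll_finite_iff eqpoll_iff_card)

subsection \<open>Categories, functors and partitions\<close>

context
  fixes C :: "('o, 'm) cat"
  assumes cat: "category C"
begin

lemma src_in_Ob: "f \<in> Mor C \<Longrightarrow> src C f \<in> Ob C"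
  and tgt_in_Ob: "f \<in> Mor C \<Longrightarrow> tgt C f \<in> Ob C"
  using cat unfolding category_def by auto

lemma comp_in_Mor: "\<lbrakk>a \<in> Mor C; b \<in> Mor C; src C a = tgt C b\<rbrakk> \<Longrightarrow> comp C a b \<in> Mor C"
  and src_comp: "\<lbrakk>a \<in> Mor C; b \<in> Mor C; src C a = tgt C b\<rbrakk> \<Longrightarrow> src C (comp C a b) = src C b"
  and tgt_comp: "\<lbrakk>a \<in> Mor C; b \<in> Mor C; src C a = tgt C b\<rbrakk> \<Longrightarrow> tgt C (comp C a b) = tgt C a"
  using cat unfolding category_def by auto

lemma comp_assoc:
  "\<lbrakk>a \<in> Mor C; b \<in> Mor C; c \<in> Mor C; src C a = tgt C b; src C b = tgt C c\<rbrakk>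
    \<Longrightarrow> comp C (comp C a b) c = comp C a (comp C b c)"
  using cat unfolding category_def by blast

lemma comp_ident_right: "f \<in> Mor C \<Longrightarrow> comp C f (ident C (src C f)) = f"
  using cat unfolding category_def by blast

lemma fact_pairs_tgt:
  assumes "\<alpha> \<subseteq> Mor C" "\<beta> \<subseteq> Mor C" "(a, b) \<in> fact_pairs C \<alpha> \<beta> h"
  shows "tgt C a = tgt C h"
proof -
  have "a \<in> Mor C" "b \<in> Mor C" "src C a = tgt C b" "comp C a b = h"
    using assms unfolding fact_pairs_def by auto
  then show ?thesis
    using tgt_comp by metis
qed

end

lemma groupoid_cancel_right:
  assumes "groupoid C" "a \<in> Mor C" "b \<in> Mor C" "src C a = tgt C b"
  obtains b' where "b' \<in> Mor C" "src C (comp C a b) = tgt C b'" "comp C (comp C a b) b' = a"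
proof -
  have cat: "category C"
    using \<open>groupoid C\<close> unfolding groupoid_def by blast
  obtain b' where b': "b' \<in> Mor C" "src C b' = tgt C b" "tgt C b' = src C b"
    "comp C b b' = ident C (tgt C b)"
    using \<open>groupoid C\<close> \<open>b \<in> Mor C\<close> unfolding groupoid_def by metis
  have "comp C (comp C a b) b' = comp C a (comp C b b')"
    using comp_assoc[OF cat assms(2,3) b'(1)] assms(4) b'(3) by simp
  also have "\<dots> = a"
    using comp_ident_right[OF cat \<open>a \<in> Mor C\<close>] assms(4) b'(4) by simp
  finally show thesis
    using that b'(1) src_comp[OF cat assms(2-4)] b'(3) by simp
qed

context
  fixes C :: "('o, 'm) cat" and D :: "('p, 'n) cat" and Fo Fm
  assumes is_functor: "is_functor C D Fo Fm"
begin

lemma functor_src: "f \<in> Mor C \<Longrightarrow> src D (Fm f) = Fo (src C f)"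
  and functor_tgt: "f \<in> Mor C \<Longrightarrow> tgt D (Fm f) = Fo (tgt C f)"
  using is_functor unfolding is_functor_def by auto

lemma functor_comp:
  "\<lbrakk>a \<in> Mor C; b \<in> Mor C; src C a = tgt C b\<rbrakk> \<Longrightarrow> Fm (comp C a b) = comp D (Fm a) (Fm b)"
  using is_functor unfolding is_functor_def by blast

end

context
  fixes S :: "'a set set" and M :: "'a set"
  assumes partition: "is_partition S M"
begin

lemma partition_block_subset: "\<sigma> \<in> S \<Longrightarrow> \<sigma> \<subseteq> M"
  and partition_block_nonempty: "\<sigma> \<in> S \<Longrightarrow> \<sigma> \<noteq> {}"
  and partition_covers: "f \<in> M \<Longrightarrow> \<exists>\<sigma>\<in>S. f \<in> \<sigma>"
  and partition_block_unique: "\<lbrakk>\<sigma> \<in> S; \<sigma>' \<in> S; f \<in> \<sigma>; f \<in> \<sigma>'\<rbrakk> \<Longrightarrow> \<sigma> = \<sigma>'"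
  using partition unfolding is_partition_def by blast+

lemma finite_partition: "finite M \<Longrightarrow> finite S"
  using partition unfolding is_partition_def by (metis finite_UnionD)

end

subsection \<open>Structure constants\<close>

lemma quasi_schemoid_category: "quasi_schemoid C S \<Longrightarrow> category C"
  and quasi_schemoid_partition: "quasi_schemoid C S \<Longrightarrow> is_partition S (Mor C)"
  unfolding quasi_schemoid_def by auto

lemma pconst_eq_card_fact_pairs:
  assumes "quasi_schemoid C S" "\<mu> \<in> S" "\<sigma> \<in> S" "\<tau> \<in> S" "f \<in> \<mu>"
  shows "pconst C \<mu> \<sigma> \<tau> = card (fact_pairs C \<sigma> \<tau> f)"
proof -
  have "(SOME f. f \<in> \<mu>) \<in> \<mu>"
    using \<open>f \<in> \<mu>\<close> by (rule someI)
  then have "fact_pairs C \<sigma> \<tau> (SOME f. f \<in> \<mu>) \<approx> fact_pairs C \<sigma> \<tau> f"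
    using assms unfolding quasi_schemoid_def by blast
  then show ?thesis
    unfolding pconst_def by (rule card_eq_if_eqpoll)
qed

lemma pconst_nonzero_imp_tgt:
  assumes qs: "quasi_schemoid D T" and "groupoid D"
    and "\<tau> \<in> T" "\<alpha> \<in> T" "\<beta> \<in> T" "pconst D \<tau> \<alpha> \<beta> \<noteq> 0" "g \<in> \<alpha>"
  shows "\<exists>h\<in>\<tau>. tgt D h = tgt D g"
proof -
  have cat: "category D" and partition: "is_partition T (Mor D)"
    using qs by (rule quasi_schemoid_category, rule quasi_schemoid_partition)
  note block_subset = partition_block_subset[OF partition]
  obtain h where "h \<in> \<tau>"
    using partition_block_nonempty[OF partition \<open>\<tau> \<in> T\<close>] by blast
  then have "fact_pairs D \<alpha> \<beta> h \<noteq> {}"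
    using pconst_eq_card_fact_pairs[OF qs \<open>\<tau> \<in> T\<close> \<open>\<alpha> \<in> T\<close> \<open>\<beta> \<in> T\<close>] \<open>pconst D \<tau> \<alpha> \<beta> \<noteq> 0\<close>
    by force
  then obtain a b where "a \<in> \<alpha>" "b \<in> \<beta>" "src D a = tgt D b" and h: "comp D a b = h"
    unfolding fact_pairs_def by auto
  moreover have "a \<in> Mor D" "b \<in> Mor D"
    using block_subset \<open>\<alpha> \<in> T\<close> \<open>\<beta> \<in> T\<close> \<open>a \<in> \<alpha>\<close> \<open>b \<in> \<beta>\<close> by auto
  ultimately obtain b' where "b' \<in> Mor D" "src D h = tgt D b'" "comp D h b' = a"
    using groupoid_cancel_right[OF \<open>groupoid D\<close>] by metis
  moreover obtain \<beta>' where "\<beta>' \<in> T" "b' \<in> \<beta>'"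
    using partition_covers[OF partition \<open>b' \<in> Mor D\<close>] by blast
  ultimately have "(h, b') \<in> fact_pairs D \<tau> \<beta>' a"
    using \<open>h \<in> \<tau>\<close> unfolding fact_pairs_def by auto
  moreover have "fact_pairs D \<tau> \<beta>' a \<approx> fact_pairs D \<tau> \<beta>' g"
    using qs \<open>\<tau> \<in> T\<close> \<open>\<beta>' \<in> T\<close> \<open>\<alpha> \<in> T\<close> \<open>a \<in> \<alpha>\<close> \<open>g \<in> \<alpha>\<close> unfolding quasi_schemoid_def by blast
  ultimately have "fact_pairs D \<tau> \<beta>' g \<noteq> {}"
    by (metis empty_iff eqpoll_empty_iff_empty)
  then obtain h' c where "(h', c) \<in> fact_pairs D \<tau> \<beta>' g"
    by auto
  moreover have "h' \<in> \<tau>"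
    using calculation unfolding fact_pairs_def by auto
  ultimately show ?thesis
    using fact_pairs_tgt[OF cat block_subset block_subset] \<open>\<tau> \<in> T\<close> \<open>\<beta>' \<in> T\<close> by metis
qed

subsection \<open>Counting lifts of factorisations\<close>

definition lifts :: "('o, 'm) cat \<Rightarrow> ('m \<Rightarrow> 'n) \<Rightarrow> 'm set \<Rightarrow> 'o \<Rightarrow> 'n \<Rightarrow> 'm set" where
  "lifts C Fm \<sigma> x g = {f \<in> \<sigma>. tgt C f = x \<and> Fm f = g}"

definition pairs_over ::
  "('o, 'm) cat \<Rightarrow> ('m \<Rightarrow> 'n) \<Rightarrow> 'm set \<Rightarrow> 'm set \<Rightarrow> 'o \<Rightarrow> 'n \<Rightarrow> ('m \<times> 'm) set" where
  "pairs_over C Fm \<pi> \<rho> x h =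
     {(a, b). a \<in> \<pi> \<and> b \<in> \<rho> \<and> src C a = tgt C b \<and> tgt C a = x \<and> Fm (comp C a b) = h}"

lemma finite_lifts: "finite \<sigma> \<Longrightarrow> finite (lifts C Fm \<sigma> x g)"
  unfolding lifts_def by simp

lemma finite_pairs_over: "finite \<pi> \<Longrightarrow> finite \<rho> \<Longrightarrow> finite (pairs_over C Fm \<pi> \<rho> x h)"
  unfolding pairs_over_def by (auto intro: finite_subset[of _ "\<pi> \<times> \<rho>"])

lemma pairs_over_eq_UN_fact_pairs:
  assumes "category C" "\<pi> \<subseteq> Mor C" "\<rho> \<subseteq> Mor C"
  shows "pairs_over C Fm \<pi> \<rho> x h = (\<Union>f\<in>lifts C Fm (Mor C) x h. fact_pairs C \<pi> \<rho> f)"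
proof (intro set_eqI iffI)
  fix p assume "p \<in> pairs_over C Fm \<pi> \<rho> x h"
  then obtain a b where "p = (a, b)" "a \<in> \<pi>" "b \<in> \<rho>" "src C a = tgt C b" "tgt C a = x"
    "Fm (comp C a b) = h"
    unfolding pairs_over_def by blast
  moreover have "a \<in> Mor C" "b \<in> Mor C"
    using assms(2,3) \<open>a \<in> \<pi>\<close> \<open>b \<in> \<rho>\<close> by auto
  then have "comp C a b \<in> Mor C" "tgt C (comp C a b) = tgt C a"
    using comp_in_Mor[OF assms(1)] tgt_comp[OF assms(1)] \<open>src C a = tgt C b\<close> by auto
  ultimately show "p \<in> (\<Union>f\<in>lifts C Fm (Mor C) x h. fact_pairs C \<pi> \<rho> f)"
    unfolding lifts_def fact_pairs_def by auto
next
  fix p assume "p \<in> (\<Union>f\<in>lifts C Fm (Mor C) x h. fact_pairs C \<pi> \<rho> f)"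
  then obtain a b where "p = (a, b)" "a \<in> \<pi>" "b \<in> \<rho>" "src C a = tgt C b"
    "tgt C (comp C a b) = x" "Fm (comp C a b) = h"
    unfolding lifts_def fact_pairs_def by blast
  moreover have "tgt C (comp C a b) = tgt C a"
    using tgt_comp[OF assms(1)] assms(2,3) \<open>a \<in> \<pi>\<close> \<open>b \<in> \<rho>\<close> \<open>src C a = tgt C b\<close> by blast
  ultimately show "p \<in> pairs_over C Fm \<pi> \<rho> x h"
    unfolding pairs_over_def by auto
qed

lemma pairs_over_fibre_eq_Sigma:
  assumes "is_functor C D Fo Fm" "\<pi> \<subseteq> Mor C" "\<rho> \<subseteq> Mor C" "comp D a' b' = h"
  shows "{p \<in> pairs_over C Fm \<pi> \<rho> x h. map_prod Fm Fm p = (a', b')}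
           = (SIGMA a:lifts C Fm \<pi> x a'. lifts C Fm \<rho> (src C a) b')"
proof (intro set_eqI iffI)
  fix p assume "p \<in> {p \<in> pairs_over C Fm \<pi> \<rho> x h. map_prod Fm Fm p = (a', b')}"
  then show "p \<in> (SIGMA a:lifts C Fm \<pi> x a'. lifts C Fm \<rho> (src C a) b')"
    unfolding pairs_over_def lifts_def by auto
next
  fix p assume "p \<in> (SIGMA a:lifts C Fm \<pi> x a'. lifts C Fm \<rho> (src C a) b')"
  then obtain a b where "p = (a, b)" "a \<in> \<pi>" "b \<in> \<rho>" "tgt C a = x" "tgt C b = src C a"
    "Fm a = a'" "Fm b = b'"
    unfolding lifts_def by auto
  moreover have "Fm (comp C a b) = comp D a' b'"
    using functor_comp[OF assms(1)] assms(2,3) calculation by (metis subsetD)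
  ultimately show "p \<in> {p \<in> pairs_over C Fm \<pi> \<rho> x h. map_prod Fm Fm p = (a', b')}"
    using assms(4) unfolding pairs_over_def by auto
qed

context
  fixes C :: "('o, 'm) cat" and S D T and Fo :: "'o \<Rightarrow> 'p" and Fm :: "'m \<Rightarrow> 'n"
  assumes morphism: "qs_morphism C S D T Fo Fm"
begin

lemma qs_morphism_source: "quasi_schemoid C S"
  and qs_morphism_target: "quasi_schemoid D T"
  and qs_morphism_functor: "is_functor C D Fo Fm"
  using morphism unfolding qs_morphism_def by auto

lemma qs_morphism_source_category: "category C"
  and qs_morphism_target_category: "category D"
  by (rule quasi_schemoid_category[OF qs_morphism_source],
      rule quasi_schemoid_category[OF qs_morphism_target])

lemma block_subset_Mor: "\<sigma> \<in> S \<Longrightarrow> \<sigma> \<subseteq> Mor C"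
  by (rule partition_block_subset[OF quasi_schemoid_partition[OF qs_morphism_source]])

lemma finite_block: "finite (Mor C) \<Longrightarrow> \<sigma> \<in> S \<Longrightarrow> finite \<sigma>"
  using finite_subset[OF block_subset_Mor] by blast

lemma blk_in: "\<sigma> \<in> S \<Longrightarrow> blk T Fm \<sigma> \<in> T"
  and image_in_blk: "\<sigma> \<in> S \<Longrightarrow> f \<in> \<sigma> \<Longrightarrow> Fm f \<in> blk T Fm \<sigma>"
proof -
  assume "\<sigma> \<in> S"
  then have "\<exists>!\<tau>. \<tau> \<in> T \<and> Fm ` \<sigma> \<subseteq> \<tau>"
    using morphism unfolding qs_morphism_def by blast
  then have "blk T Fm \<sigma> \<in> T \<and> Fm ` \<sigma> \<subseteq> blk T Fm \<sigma>"
    unfolding blk_def by (rule theI')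
  then show "blk T Fm \<sigma> \<in> T" and "f \<in> \<sigma> \<Longrightarrow> Fm f \<in> blk T Fm \<sigma>"
    by auto
qed

lemma blk_subset_Mor: "\<sigma> \<in> S \<Longrightarrow> blk T Fm \<sigma> \<subseteq> Mor D"
  by (rule partition_block_subset[OF quasi_schemoid_partition[OF qs_morphism_target] blk_in])

lemma blk_eqI:
  assumes "\<sigma> \<in> S" "\<tau> \<in> T" "f \<in> \<sigma>" "Fm f \<in> \<tau>"
  shows "blk T Fm \<sigma> = \<tau>"
  using partition_block_unique[OF quasi_schemoid_partition[OF qs_morphism_target]]
    blk_in[OF \<open>\<sigma> \<in> S\<close>] image_in_blk[OF \<open>\<sigma> \<in> S\<close> \<open>f \<in> \<sigma>\<close>] assms(2,4)
  by metis

lemma blk_meets_image_of_Ob: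
  assumes "\<sigma> \<in> S"
  shows "\<exists>g\<in>blk T Fm \<sigma>. \<exists>x\<in>Ob C. tgt D g = Fo x"
proof -
  have partition: "is_partition S (Mor C)"
    by (rule quasi_schemoid_partition[OF qs_morphism_source])
  obtain f where "f \<in> \<sigma>"
    using partition_block_nonempty[OF partition \<open>\<sigma> \<in> S\<close>] by blast
  moreover have "f \<in> Mor C"
    using block_subset_Mor[OF \<open>\<sigma> \<in> S\<close>] \<open>f \<in> \<sigma>\<close> by blast
  ultimately show ?thesis
    using image_in_blk[OF \<open>\<sigma> \<in> S\<close>] tgt_in_Ob[OF qs_morphism_source_category]
      functor_tgt[OF qs_morphism_functor] by blast
qed

lemma no_block_mapped_to:
  assumes "\<forall>h\<in>\<tau>. tgt D h \<notin> Fo ` Ob C"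
  shows "{\<sigma> \<in> S. blk T Fm \<sigma> = \<tau>} = {}"
  using blk_meets_image_of_Ob assms by blast

lemma pconst_blk_eq_0:
  assumes "groupoid D" "\<pi> \<in> S" "\<rho> \<in> S" "\<tau> \<in> T" "\<forall>h\<in>\<tau>. tgt D h \<notin> Fo ` Ob C"
  shows "pconst D \<tau> (blk T Fm \<pi>) (blk T Fm \<rho>) = 0"
proof (rule ccontr)
  assume "pconst D \<tau> (blk T Fm \<pi>) (blk T Fm \<rho>) \<noteq> 0"
  moreover obtain g x where "g \<in> blk T Fm \<pi>" "x \<in> Ob C" "tgt D g = Fo x"
    using blk_meets_image_of_Ob[OF \<open>\<pi> \<in> S\<close>] by blast
  ultimately obtain h where "h \<in> \<tau>" "tgt D h = Fo x"
    using pconst_nonzero_imp_tgt[OF qs_morphism_target \<open>groupoid D\<close> \<open>\<tau> \<in> T\<close>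
        blk_in[OF \<open>\<pi> \<in> S\<close>] blk_in[OF \<open>\<rho> \<in> S\<close>]] by metis
  then show False
    using assms(5) \<open>x \<in> Ob C\<close> by blast
qed

lemma lifts_Mor_eq_UN_blocks:
  assumes "\<tau> \<in> T" "h \<in> \<tau>"
  shows "lifts C Fm (Mor C) x h = (\<Union>\<sigma>\<in>{\<sigma> \<in> S. blk T Fm \<sigma> = \<tau>}. lifts C Fm \<sigma> x h)"
proof
  have partition: "is_partition S (Mor C)"
    by (rule quasi_schemoid_partition[OF qs_morphism_source])
  show "lifts C Fm (Mor C) x h \<subseteq> (\<Union>\<sigma>\<in>{\<sigma> \<in> S. blk T Fm \<sigma> = \<tau>}. lifts C Fm \<sigma> x h)"
  proof
    fix f assume "f \<in> lifts C Fm (Mor C) x h"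
    then have "f \<in> Mor C" "tgt C f = x" "Fm f = h"
      unfolding lifts_def by auto
    moreover obtain \<sigma> where "\<sigma> \<in> S" "f \<in> \<sigma>"
      using partition_covers[OF partition \<open>f \<in> Mor C\<close>] by blast
    moreover have "blk T Fm \<sigma> = \<tau>"
      using blk_eqI[OF \<open>\<sigma> \<in> S\<close> \<open>\<tau> \<in> T\<close> \<open>f \<in> \<sigma>\<close>] \<open>Fm f = h\<close> \<open>h \<in> \<tau>\<close> by simp
    ultimately show "f \<in> (\<Union>\<sigma>\<in>{\<sigma> \<in> S. blk T Fm \<sigma> = \<tau>}. lifts C Fm \<sigma> x h)"
      unfolding lifts_def by auto
  qed
  show "(\<Union>\<sigma>\<in>{\<sigma> \<in> S. blk T Fm \<sigma> = \<tau>}. lifts C Fm \<sigma> x h) \<subseteq> lifts C Fm (Mor C) x h"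
    using block_subset_Mor unfolding lifts_def by auto
qed

lemma image_pairs_over_subset_fact_pairs:
  assumes "\<pi> \<in> S" "\<rho> \<in> S"
  shows "map_prod Fm Fm ` pairs_over C Fm \<pi> \<rho> x h \<subseteq> fact_pairs D (blk T Fm \<pi>) (blk T Fm \<rho>) h"
proof
  fix q assume "q \<in> map_prod Fm Fm ` pairs_over C Fm \<pi> \<rho> x h"
  then obtain a b where "q = (Fm a, Fm b)" "a \<in> \<pi>" "b \<in> \<rho>" "src C a = tgt C b"
    "Fm (comp C a b) = h"
    unfolding pairs_over_def by auto
  moreover have "a \<in> Mor C" "b \<in> Mor C"
    using block_subset_Mor assms calculation by auto
  ultimately show "q \<in> fact_pairs D (blk T Fm \<pi>) (blk T Fm \<rho>) h"
    using functor_comp[OF qs_morphism_functor] functor_src[OF qs_morphism_functor]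
      functor_tgt[OF qs_morphism_functor] image_in_blk assms
    unfolding fact_pairs_def by auto
qed

lemma card_pairs_over_by_composite:
  assumes "finite (Mor C)" "\<pi> \<in> S" "\<rho> \<in> S" "\<tau> \<in> T" "h \<in> \<tau>"
  shows "card (pairs_over C Fm \<pi> \<rho> x h)
           = (\<Sum>\<sigma> \<in> {\<sigma> \<in> S. blk T Fm \<sigma> = \<tau>}. pconst C \<sigma> \<pi> \<rho> * card (lifts C Fm \<sigma> x h))"
proof -
  have partition: "is_partition S (Mor C)"
    by (rule quasi_schemoid_partition[OF qs_morphism_source])
  note finite_block = finite_block[OF \<open>finite (Mor C)\<close>]
  let ?S\<tau> = "{\<sigma> \<in> S. blk T Fm \<sigma> = \<tau>}"
  have "card (pairs_over C Fm \<pi> \<rho> x h) = (\<Sum>f\<in>lifts C Fm (Mor C) x h. card (fact_pairs C \<pi> \<rho> f))"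
    unfolding pairs_over_eq_UN_fact_pairs[OF qs_morphism_source_category
      block_subset_Mor[OF \<open>\<pi> \<in> S\<close>] block_subset_Mor[OF \<open>\<rho> \<in> S\<close>]]
  proof (rule card_UN_disjoint)
    show "finite (lifts C Fm (Mor C) x h)"
      using \<open>finite (Mor C)\<close> by (rule finite_lifts)
    have "fact_pairs C \<pi> \<rho> f \<subseteq> \<pi> \<times> \<rho>" for f
      unfolding fact_pairs_def by blast
    then show "\<forall>f\<in>lifts C Fm (Mor C) x h. finite (fact_pairs C \<pi> \<rho> f)"
      using finite_subset finite_SigmaI[OF finite_block[OF \<open>\<pi> \<in> S\<close>] finite_block[OF \<open>\<rho> \<in> S\<close>]]
      by blast
  qed (auto simp: fact_pairs_def)
  also have "\<dots> = (\<Sum>\<sigma>\<in>?S\<tau>. \<Sum>f\<in>lifts C Fm \<sigma> x h. card (fact_pairs C \<pi> \<rho> f))"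
    unfolding lifts_Mor_eq_UN_blocks[OF \<open>\<tau> \<in> T\<close> \<open>h \<in> \<tau>\<close>]
  proof (rule sum.UNION_disjoint)
    show "finite ?S\<tau>"
      using finite_partition[OF partition \<open>finite (Mor C)\<close>] by simp
    show "\<forall>\<sigma>\<in>?S\<tau>. finite (lifts C Fm \<sigma> x h)"
      by (simp add: finite_lifts finite_block)
    show "\<forall>\<sigma>\<in>?S\<tau>. \<forall>\<sigma>'\<in>?S\<tau>. \<sigma> \<noteq> \<sigma>' \<longrightarrow> lifts C Fm \<sigma> x h \<inter> lifts C Fm \<sigma>' x h = {}"
      using partition_block_unique[OF partition] unfolding lifts_def by blast
  qed
  also have "\<dots> = (\<Sum>\<sigma>\<in>?S\<tau>. pconst C \<sigma> \<pi> \<rho> * card (lifts C Fm \<sigma> x h))"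
  proof (rule sum.cong)
    fix \<sigma> assume "\<sigma> \<in> ?S\<tau>"
    then have "card (fact_pairs C \<pi> \<rho> f) = pconst C \<sigma> \<pi> \<rho>" if "f \<in> lifts C Fm \<sigma> x h" for f
      using pconst_eq_card_fact_pairs[OF qs_morphism_source _ \<open>\<pi> \<in> S\<close> \<open>\<rho> \<in> S\<close>] that
      unfolding lifts_def by auto
    then show "(\<Sum>f\<in>lifts C Fm \<sigma> x h. card (fact_pairs C \<pi> \<rho> f))
                 = pconst C \<sigma> \<pi> \<rho> * card (lifts C Fm \<sigma> x h)"
      by simp
  qed simp
  finally show ?thesis .
qed

lemma fact_pairs_blk_tgt:
  assumes "\<pi> \<in> S" "\<rho> \<in> S" "(a', b') \<in> fact_pairs D (blk T Fm \<pi>) (blk T Fm \<rho>) h"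
  shows "tgt D a' = tgt D h"
  by (rule fact_pairs_tgt[OF qs_morphism_target_category
        blk_subset_Mor[OF \<open>\<pi> \<in> S\<close>] blk_subset_Mor[OF \<open>\<rho> \<in> S\<close>] assms(3)])

lemma card_pairs_over_fibre:
  assumes "finite (Mor C)" "\<pi> \<in> S" "\<rho> \<in> S" "x \<in> Ob C" "tgt D h = Fo x"
    and q: "(a', b') \<in> fact_pairs D (blk T Fm \<pi>) (blk T Fm \<rho>) h"
    and lifts_card: "\<forall>\<sigma>\<in>S. \<forall>y\<in>Ob C. \<forall>g\<in>blk T Fm \<sigma>. tgt D g = Fo y \<longrightarrow>
                       card (lifts C Fm \<sigma> y g) = n \<sigma>"
  shows "card {p \<in> pairs_over C Fm \<pi> \<rho> x h. map_prod Fm Fm p = (a', b')} = n \<pi> * n \<rho>"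
proof -
  have "a' \<in> blk T Fm \<pi>" "b' \<in> blk T Fm \<rho>" "src D a' = tgt D b'" "comp D a' b' = h"
    using q unfolding fact_pairs_def by auto
  have "card (lifts C Fm \<rho> (src C a) b') = n \<rho>" if "a \<in> lifts C Fm \<pi> x a'" for a
  proof -
    have "a \<in> Mor C" "Fm a = a'"
      using that block_subset_Mor[OF \<open>\<pi> \<in> S\<close>] unfolding lifts_def by auto
    then have "src C a \<in> Ob C" "tgt D b' = Fo (src C a)"
      using src_in_Ob[OF qs_morphism_source_category] functor_src[OF qs_morphism_functor]
        \<open>src D a' = tgt D b'\<close> by auto
    then show ?thesis
      using lifts_card \<open>\<rho> \<in> S\<close> \<open>b' \<in> blk T Fm \<rho>\<close> by simp
  qed
  moreover have "card (lifts C Fm \<pi> x a') = n \<pi>"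
    using lifts_card \<open>\<pi> \<in> S\<close> \<open>x \<in> Ob C\<close> \<open>a' \<in> blk T Fm \<pi>\<close>
      fact_pairs_blk_tgt[OF \<open>\<pi> \<in> S\<close> \<open>\<rho> \<in> S\<close> q] \<open>tgt D h = Fo x\<close> by simp
  ultimately have "card (SIGMA a:lifts C Fm \<pi> x a'. lifts C Fm \<rho> (src C a) b') = n \<pi> * n \<rho>"
    by (simp add: finite_lifts finite_block \<open>finite (Mor C)\<close> \<open>\<pi> \<in> S\<close> \<open>\<rho> \<in> S\<close>)
  then show ?thesis
    using pairs_over_fibre_eq_Sigma[OF qs_morphism_functor block_subset_Mor block_subset_Mor
        \<open>comp D a' b' = h\<close>] \<open>\<pi> \<in> S\<close> \<open>\<rho> \<in> S\<close> by simp
qed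

end

context
  fixes C :: "('o, 'm) cat" and S D T and Fo :: "'o \<Rightarrow> 'p" and Fm :: "'m \<Rightarrow> 'n"
  assumes admissible: "admissible C S D T Fo Fm"
begin

lemma admissible_qs_morphism: "qs_morphism C S D T Fo Fm"
  using admissible unfolding admissible_def by blast

lemma admissible_lift:
  assumes "\<sigma> \<in> S" "x \<in> Ob C" "g \<in> blk T Fm \<sigma>" "tgt D g = Fo x"
  obtains f where "f \<in> \<sigma>" "tgt C f = x" "Fm f = g"
  using admissible assms unfolding admissible_def by blast

lemma fact_pairs_subset_image_pairs_over:
  assumes "\<pi> \<in> S" "\<rho> \<in> S" "x \<in> Ob C" "tgt D h = Fo x"
  shows "fact_pairs D (blk T Fm \<pi>) (blk T Fm \<rho>) h \<subseteq> map_prod Fm Fm ` pairs_over C Fm \<pi> \<rho> x h"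
proof
  note morphism = admissible_qs_morphism
  note functorial = qs_morphism_functor[OF morphism]
  fix q assume q: "q \<in> fact_pairs D (blk T Fm \<pi>) (blk T Fm \<rho>) h"
  then obtain a' b' where "q = (a', b')" "a' \<in> blk T Fm \<pi>" "b' \<in> blk T Fm \<rho>"
    "src D a' = tgt D b'" "comp D a' b' = h"
    unfolding fact_pairs_def by auto
  moreover have "tgt D a' = Fo x"
    using fact_pairs_blk_tgt[OF morphism assms(1,2)] q calculation(1) assms(4) by simp
  ultimately obtain a where a: "a \<in> \<pi>" "tgt C a = x" "Fm a = a'"
    using admissible_lift[OF \<open>\<pi> \<in> S\<close> \<open>x \<in> Ob C\<close>] by metis
  then have "a \<in> Mor C"
    using block_subset_Mor[OF morphism \<open>\<pi> \<in> S\<close>] by auto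
  then have "src C a \<in> Ob C" "tgt D b' = Fo (src C a)"
    using src_in_Ob[OF qs_morphism_source_category[OF morphism]] functor_src[OF functorial]
      \<open>src D a' = tgt D b'\<close> a(3) by auto
  then obtain b where b: "b \<in> \<rho>" "tgt C b = src C a" "Fm b = b'"
    using admissible_lift[OF \<open>\<rho> \<in> S\<close> _ \<open>b' \<in> blk T Fm \<rho>\<close>] by metis
  moreover have "b \<in> Mor C"
    using block_subset_Mor[OF morphism \<open>\<rho> \<in> S\<close>] b(1) by auto
  ultimately have "Fm (comp C a b) = h"
    using functor_comp[OF functorial \<open>a \<in> Mor C\<close>] a(3) \<open>comp D a' b' = h\<close> by simp
  then have "(a, b) \<in> pairs_over C Fm \<pi> \<rho> x h"
    using a b unfolding pairs_over_def by auto
  then show "q \<in> map_prod Fm Fm ` pairs_over C Fm \<pi> \<rho> x h"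
    using a(3) b(3) \<open>q = (a', b')\<close> by force
qed

lemma card_pairs_over_by_image:
  assumes "finite (Mor C)" "\<pi> \<in> S" "\<rho> \<in> S" "x \<in> Ob C" "tgt D h = Fo x"
    and lifts_card: "\<forall>\<sigma>\<in>S. \<forall>y\<in>Ob C. \<forall>g\<in>blk T Fm \<sigma>. tgt D g = Fo y \<longrightarrow>
                       card (lifts C Fm \<sigma> y g) = n \<sigma>"
  shows "card (pairs_over C Fm \<pi> \<rho> x h)
           = card (fact_pairs D (blk T Fm \<pi>) (blk T Fm \<rho>) h) * n \<pi> * n \<rho>"
proof -
  note morphism = admissible_qs_morphism
  let ?X = "pairs_over C Fm \<pi> \<rho> x h"
  let ?P = "fact_pairs D (blk T Fm \<pi>) (blk T Fm \<rho>) h"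
  have finite_X: "finite ?X"
    by (rule finite_pairs_over[OF finite_block[OF morphism assms(1,2)] finite_block[OF morphism assms(1,3)]])
  have "card ?X = (\<Sum>q\<in>?P. card {p \<in> ?X. map_prod Fm Fm p = q})"
    unfolding card_eq_sum
    by (rule sum.group[symmetric, OF finite_X
          finite_surj[OF finite_X fact_pairs_subset_image_pairs_over[OF assms(2-5)]]
          image_pairs_over_subset_fact_pairs[OF morphism assms(2,3)]])
  also have "\<dots> = (\<Sum>q\<in>?P. n \<pi> * n \<rho>)"
    using card_pairs_over_fibre[OF morphism assms(1-5) _ lifts_card]
    by (intro sum.cong) (auto simp: split_paired_all)
  also have "\<dots> = card ?P * n \<pi> * n \<rho>"
    by simp
  finally show ?thesis .
qed

end

theorem lemma6p6:
  fixes C :: "('o, 'm) cat" and S :: "'m set set"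
    and D :: "('p, 'n) cat" and T :: "'n set set"
    and Fo :: "'o \<Rightarrow> 'p" and Fm :: "'m \<Rightarrow> 'n"
    and n :: "'m set \<Rightarrow> nat"
  assumes "finite_qs C S" and "groupoid C" and "basic D T"
    and "admissible C S D T Fo Fm"
    and "\<forall>\<sigma>\<in>S. \<forall>x\<in>Ob C. \<forall>g\<in>blk T Fm \<sigma>. tgt D g = Fo x \<longrightarrow>
           card {f \<in> \<sigma>. tgt C f = x \<and> Fm f = g} = n \<sigma>"
    and "\<pi> \<in> S" and "\<rho> \<in> S" and "\<tau> \<in> T"
  shows "(\<Sum>\<sigma> \<in> {\<sigma> \<in> S. blk T Fm \<sigma> = \<tau>}. pconst C \<sigma> \<pi> \<rho> * n \<sigma>)
           = pconst D \<tau> (blk T Fm \<pi>) (blk T Fm \<rho>) * n \<pi> * n \<rho>"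
proof -
  note morphism = admissible_qs_morphism[OF \<open>admissible C S D T Fo Fm\<close>]
  have finite: "finite (Mor C)"
    using \<open>finite_qs C S\<close> unfolding finite_qs_def by blast
  have lifts_card: "\<forall>\<sigma>\<in>S. \<forall>y\<in>Ob C. \<forall>g\<in>blk T Fm \<sigma>. tgt D g = Fo y \<longrightarrow>
                       card (lifts C Fm \<sigma> y g) = n \<sigma>"
    using assms(5) unfolding lifts_def .
  show ?thesis
  proof (cases "\<forall>h\<in>\<tau>. tgt D h \<notin> Fo ` Ob C")
    case True
    moreover have "groupoid D"
      using \<open>basic D T\<close> unfolding basic_def by blast
    ultimately show ?thesis
      by (simp only: no_block_mapped_to[OF morphism] pconst_blk_eq_0[OF morphism _ assms(6-8)]
          sum.empty mult_0)
  next
    case False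
    then obtain h x where "h \<in> \<tau>" "x \<in> Ob C" "tgt D h = Fo x"
      by blast
    have "(\<Sum>\<sigma> \<in> {\<sigma> \<in> S. blk T Fm \<sigma> = \<tau>}. pconst C \<sigma> \<pi> \<rho> * n \<sigma>)
            = (\<Sum>\<sigma> \<in> {\<sigma> \<in> S. blk T Fm \<sigma> = \<tau>}. pconst C \<sigma> \<pi> \<rho> * card (lifts C Fm \<sigma> x h))"
      using lifts_card \<open>h \<in> \<tau>\<close> \<open>x \<in> Ob C\<close> \<open>tgt D h = Fo x\<close> by (intro sum.cong) auto
    also have "\<dots> = card (pairs_over C Fm \<pi> \<rho> x h)"
      using card_pairs_over_by_composite[OF morphism finite assms(6-8) \<open>h \<in> \<tau>\<close>] by simp
    also have "\<dots> = card (fact_pairs D (blk T Fm \<pi>) (blk T Fm \<rho>) h) * n \<pi> * n \<rho>"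
      by (rule card_pairs_over_by_image[OF assms(4) finite assms(6,7) \<open>x \<in> Ob C\<close> \<open>tgt D h = Fo x\<close>
            lifts_card])
    also have "card (fact_pairs D (blk T Fm \<pi>) (blk T Fm \<rho>) h) = pconst D \<tau> (blk T Fm \<pi>) (blk T Fm \<rho>)"
      using pconst_eq_card_fact_pairs[OF qs_morphism_target[OF morphism] \<open>\<tau> \<in> T\<close>
          blk_in[OF morphism \<open>\<pi> \<in> S\<close>] blk_in[OF morphism \<open>\<rho> \<in> S\<close>] \<open>h \<in> \<tau>\<close>]
      by simp
    finally show ?thesis .
  qed
qed

end
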